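(* Let $I$ be an ideal of a Noetherian ring $A$. Then $I_>\subseteq{}^*I$.
   Context: For $a\in A$, $\operatorname{ord}_I(a)=n$ if $a\in I^n\setminus I^{n+1}$ and $\infty$ if $a\in\bigcap_n I^n$; $\overline{v}_I(a)=\lim_{n\to\infty}\operatorname{ord}_I(a^n)/n$ (the limit exists, possibly $\infty$); $I_>=\{a\in A\mid\overline{v}_I(a)>1\}$. ${}^*I$ is the weak subintegral closure of $I$: $b\in A$ lies in ${}^*I$ if there exist $q\in\mathbb{N}$ and $a_i\in I^i$ ($1\le i\le 2q+1$) with $b^n+\sum_{i=1}^n\binom{n}{i}a_ib^{n-i}=0$ for all $q+1\le n\le 2q+1$. *)

theory Defs
  imports "HOL-Algebra.Algebra" "HOL-Library.Extended_Real"
begin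

primrec ideal_pow :: "('a, 'b) ring_scheme \<Rightarrow> 'a set \<Rightarrow> nat \<Rightarrow> 'a set" where
  "ideal_pow R I 0 = carrier R"
| "ideal_pow R I (Suc n) = ideal_prod R I (ideal_pow R I n)"

definition ord_ideal :: "('a, 'b) ring_scheme \<Rightarrow> 'a set \<Rightarrow> 'a \<Rightarrow> enat" where
  "ord_ideal R I a =
     (if a \<in> (\<Inter>n. ideal_pow R I n) then \<infinity>
      else enat (THE n. a \<in> ideal_pow R I n \<and> a \<notin> ideal_pow R I (Suc n)))"

definition vbar :: "('a, 'b) ring_scheme \<Rightarrow> 'a set \<Rightarrow> 'a \<Rightarrow> ereal" where
  "vbar R I a = lim (\<lambda>n. ereal_of_enat (ord_ideal R I (a [^]\<^bsub>R\<^esub> n)) / ereal (real n))"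

definition I_gt :: "('a, 'b) ring_scheme \<Rightarrow> 'a set \<Rightarrow> 'a set" where
  "I_gt R I = {a \<in> carrier R. vbar R I a > 1}"

definition weak_subintegral_closure :: "('a, 'b) ring_scheme \<Rightarrow> 'a set \<Rightarrow> 'a set" where
  "weak_subintegral_closure R I =
     {b \<in> carrier R. \<exists>(q::nat) (a::nat \<Rightarrow> 'a).
        (\<forall>i \<in> {1..2*q+1}. a i \<in> ideal_pow R I i) \<and>
        (\<forall>n \<in> {q+1..2*q+1}.
           b [^]\<^bsub>R\<^esub> n \<oplus>\<^bsub>R\<^esub>
             (\<Oplus>\<^bsub>R\<^esub>i\<in>{1..n}. add_pow R (n choose i) (a i \<otimes>\<^bsub>R\<^esub> b [^]\<^bsub>R\<^esub> (n - i)))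
           = \<zero>\<^bsub>R\<^esub>)}"

end

theory Submission
  imports Defs
begin

text \<open>
  If some power satisfies \<open>b^k \<in> I^(k+1)\<close>, then \<open>b^i \<in> I^i\<close> for all \<open>i > k\<^sup>2\<close>, and any such \<open>b\<close>
  is weakly subintegral: taking \<open>a\<^sub>i = \<lambda>\<^sub>i b^i\<close> with integers \<open>\<lambda>\<^sub>i\<close> vanishing for \<open>i \<le> q\<close>, the defining
  equations become \<open>(1 + \<Sum>\<^sub>i (n choose i) \<lambda>\<^sub>i) b^n = 0\<close>, a unitriangular linear system for the \<open>\<lambda>\<^sub>i\<close>.
  Otherwise \<open>ord\<^sub>I(b^n) \<le> n\<close> for all \<open>n \<ge> 1\<close>; since \<open>n \<mapsto> ord\<^sub>I(b^n)\<close> is superadditive, a Fekete-type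
  argument shows that \<open>ord\<^sub>I(b^n)/n\<close> converges to a limit \<open>\<le> 1\<close>, so \<open>b \<notin> I\<^sub>>\<close>.
\<close>

lemma binomial_system_solvable:
  "\<exists>lam::nat \<Rightarrow> int. (\<forall>i\<le>q. lam i = 0) \<and>
     (\<forall>n\<in>{q+1..N}. (\<Sum>i=1..n. int (n choose i) * lam i) = -1)"
proof (induction N)
  case 0
  show ?case by (intro exI[of _ "\<lambda>_. 0"]) auto
next
  case (Suc N)
  then obtain lam :: "nat \<Rightarrow> int" where zero: "\<forall>i\<le>q. lam i = 0"
    and sol: "\<forall>n\<in>{q+1..N}. (\<Sum>i=1..n. int (n choose i) * lam i) = -1"
    by blast
  show ?case
  proof (cases "Suc N \<le> q")
    case True
    then show ?thesis using zero by (intro exI[of _ lam]) auto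
  next
    case False
    define lam' where
      "lam' = lam(Suc N := -1 - (\<Sum>i=1..N. int (Suc N choose i) * lam i))"
    have "(\<Sum>i=1..n. int (n choose i) * lam' i) = (\<Sum>i=1..n. int (n choose i) * lam i)"
      if "n \<le> N" for n
      using that unfolding lam'_def by (intro sum.cong) auto
    then have "(\<Sum>i=1..n. int (n choose i) * lam' i) = -1" if "n \<in> {q+1..Suc N}" for n
      using that sol by (cases "n = Suc N") (auto simp: lam'_def)
    moreover have "\<forall>i\<le>q. lam' i = 0" using zero False by (auto simp: lam'_def)
    ultimately show ?thesis by blast
  qed
qed

lemma div_superadditive_ratio_lower_bound:
  fixes g :: "nat \<Rightarrow> nat"
  assumes "1 \<le> k" "k \<le> n" "g k \<le> k" "(n div k) * g k \<le> g n"
  shows "real (g k) / k - k / n \<le> real (g n) / n"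
proof -
  have "n \<le> (n div k) * k + k"
    using div_mult_mod_eq[of n k] mod_less_divisor[of k n] assms(1) by linarith
  then have "real n - k \<le> real (n div k) * k"
    by (metis add_le_cancel_right diff_add_cancel of_nat_add of_nat_le_iff of_nat_mult)
  then have "(real n - k) * g k \<le> real (n div k) * k * g k"
    by (rule mult_right_mono) simp
  also have "\<dots> = real ((n div k) * g k) * k" by simp
  also have "\<dots> \<le> real (g n) * k"
    using assms(4) by (intro mult_right_mono) (simp_all only: of_nat_le_iff of_nat_0_le_iff)
  finally have "(real n - k) * g k \<le> real (g n) * k" .
  moreover have "real (g k) * k \<le> real k * k"
    using assms(3) by (intro mult_right_mono) simp_all
  ultimately have "real (g k) * n - real k * k \<le> real (g n) * k"
    by (simp add: algebra_simps)
  then have "(real (g k) * n - real k * k) / (k * n) \<le> real (g n) * k / (k * n)"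
    by (intro divide_right_mono) simp_all
  moreover have "(real (g k) * n - real k * k) / (k * n) = real (g k) / k - k / n"
    using assms(1,2) by (simp add: field_simps)
  ultimately show ?thesis using assms(1) by simp
qed

lemma div_superadditive_ratio_convergent:
  fixes g :: "nat \<Rightarrow> nat"
  assumes le: "\<And>n. 1 \<le> n \<Longrightarrow> g n \<le> n"
    and superadd: "\<And>n k. 1 \<le> k \<Longrightarrow> (n div k) * g k \<le> g n"
  shows "\<exists>s\<le>1. (\<lambda>n. real (g n) / n) \<longlonglongrightarrow> s"
proof -
  define h where "h n = real (g n) / n" for n
  define s where "s = (SUP n\<in>{1..}. h n)"
  have h_le_1: "h n \<le> 1" if "1 \<le> n" for n
    using le[OF that] that unfolding h_def by (simp add: divide_le_eq)
  have bdd: "bdd_above (h ` {1..})" using h_le_1 by (intro bdd_aboveI[of _ 1]) auto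
  have h_le_s: "h n \<le> s" if "1 \<le> n" for n
    unfolding s_def using bdd that by (intro cSUP_upper) auto
  have "s \<le> 1" unfolding s_def using h_le_1 by (intro cSUP_least) auto
  moreover have "h \<longlonglongrightarrow> s"
  proof (rule LIMSEQ_I)
    fix r :: real assume r: "0 < r"
    obtain k where k: "1 \<le> k" "s - r/2 < h k"
      using less_cSUP_iff[OF _ bdd, of "s - r/2"] r by (auto simp: s_def)
    obtain N :: nat where N: "2 * k / r < N" using reals_Archimedean2 by blast
    have "norm (h n - s) < r" if n: "N \<le> n" "k \<le> n" for n
    proof -
      have "2 * k / r < n" using N n(1) by linarith
      then have "k / n < r / 2" using r k(1) n(2) by (simp add: field_simps)
      moreover have "h k - k / n \<le> h n"
        using div_superadditive_ratio_lower_bound[where n = n,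
            OF k(1) n(2) le[OF k(1)] superadd[OF k(1)]]
        unfolding h_def .
      moreover have "h n \<le> s" using h_le_s k(1) n(2) by simp
      ultimately show ?thesis using k(2) unfolding real_norm_def abs_less_iff by linarith
    qed
    then show "\<exists>N. \<forall>n\<ge>N. norm (h n - s) < r" by (intro exI[of _ "max N k"]) simp
  qed
  ultimately show ?thesis unfolding h_def by blast
qed

lemma (in abelian_group) finsum_add_pow_int:
  assumes "x \<in> carrier G" "finite A"
  shows "(\<Oplus>i\<in>A. add_pow G (c i :: int) x) = add_pow G (\<Sum>i\<in>A. c i) x"
  using assms(2)
proof (induction A rule: finite_induct)
  case empty
  then show ?case using add_pow_int_ge[of "0::int" G x] by simp
next
  case (insert j F)
  then show ?case using assms(1) by (simp add: finsum_insert add.int_pow_mult)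
qed

context cring
begin

lemma ideal_pow_ideal: "ideal I R \<Longrightarrow> ideal (ideal_pow R I n) R"
  by (induction n) (auto simp: oneideal ideal_prod_is_ideal)

lemma ideal_pow_Suc_subset: "ideal I R \<Longrightarrow> ideal_pow R I (Suc n) \<subseteq> ideal_pow R I n"
  using ideal_prod_inter[OF _ ideal_pow_ideal] by auto

lemma ideal_pow_antimono:
  assumes "ideal I R" "m \<le> n"
  shows "ideal_pow R I n \<subseteq> ideal_pow R I m"
  using assms(2)
proof (induction n rule: dec_induct)
  case (step n)
  then show ?case using ideal_pow_Suc_subset[OF assms(1), of n] by blast
qed simp

lemma ideal_pow_add:
  assumes "ideal I R"
  shows "ideal_pow R I (m + n) = ideal_pow R I m \<cdot> ideal_pow R I n"
proof (induction m)
  case 0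
  show ?case
    using ideal_prod_commute[OF oneideal ideal_pow_ideal[OF assms]]
      ideal_prod_one[OF ideal_pow_ideal[OF assms, of n]] by simp
next
  case (Suc m)
  then show ?case
    using ideal_prod_assoc[OF assms ideal_pow_ideal[OF assms] ideal_pow_ideal[OF assms]] by simp
qed

lemma ideal_pow_mult_mem:
  "ideal I R \<Longrightarrow> x \<in> ideal_pow R I m \<Longrightarrow> y \<in> ideal_pow R I n \<Longrightarrow>
    x \<otimes> y \<in> ideal_pow R I (m + n)"
  unfolding ideal_pow_add[of I m n] by (rule ideal_prod.prod)

lemma ideal_pow_nat_pow_mem:
  assumes "ideal I R" "x \<in> ideal_pow R I m"
  shows "x [^] j \<in> ideal_pow R I (j * m)"
proof (induction j)
  case 0
  then show ?case by simp
next
  case (Suc j)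
  then show ?case
    using ideal_pow_mult_mem[OF assms(1) Suc assms(2)] by (simp add: add.commute)
qed

lemma ideal_pow_exists_exact:
  assumes "ideal I R" "x \<in> carrier R" "x \<notin> ideal_pow R I N"
  shows "\<exists>m<N. x \<in> ideal_pow R I m \<and> x \<notin> ideal_pow R I (Suc m)"
  using assms(3)
proof (induction N)
  case (Suc N)
  then show ?case by (cases "x \<in> ideal_pow R I N") (auto intro: less_SucI)
qed (simp add: assms(2))

lemma ord_ideal_eq_enat:
  assumes I: "ideal I R" and "x \<in> ideal_pow R I m" "x \<notin> ideal_pow R I (Suc m)"
  shows "ord_ideal R I x = enat m"
proof -
  have unique: "n = m" if "x \<in> ideal_pow R I n" "x \<notin> ideal_pow R I (Suc n)" for n
    using ideal_pow_antimono[OF I, of "Suc n" m] ideal_pow_antimono[OF I, of "Suc m" n]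
      assms(2,3) that
    by (metis not_less_eq_eq order_antisym subsetD)
  have "(THE n. x \<in> ideal_pow R I n \<and> x \<notin> ideal_pow R I (Suc n)) = m"
    using unique assms(2,3) by (intro the_equality) blast+
  moreover have "x \<notin> (\<Inter>n. ideal_pow R I n)" using assms(3) by blast
  ultimately show ?thesis unfolding ord_ideal_def by simp
qed

lemma weak_subintegral_closure_memI:
  assumes I: "ideal I R" and b: "b \<in> carrier R"
    and powers: "\<And>i. q < i \<Longrightarrow> b [^] i \<in> ideal_pow R I i"
  shows "b \<in> weak_subintegral_closure R I"
proof -
  obtain lam :: "nat \<Rightarrow> int" where zero: "\<And>i. i \<le> q \<Longrightarrow> lam i = 0"
    and sol: "\<And>n. n \<in> {q+1..2*q+1} \<Longrightarrow> (\<Sum>i=1..n. int (n choose i) * lam i) = -1"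
    using binomial_system_solvable[of q "2*q+1"] by blast
  define a where "a i = add_pow R (lam i) (b [^] i)" for i
  have "a i \<in> ideal_pow R I i" for i
  proof (cases "i \<le> q")
    case True
    then have "a i = \<zero>" using zero add_pow_int_ge[of "0::int" R] by (simp add: a_def)
    then show ?thesis using ideal.axioms(1)[OF ideal_pow_ideal[OF I]]
      by (simp add: additive_subgroup.zero_closed)
  next
    case False
    have "a i = add_pow R (lam i) \<one> \<otimes> b [^] i" using b by (simp add: a_def add_pow_ldistr_int)
    then show ?thesis
      using False powers[of i] ideal.I_l_closed[OF ideal_pow_ideal[OF I]] b by simp
  qed
  moreover have "b [^] n \<oplus> (\<Oplus>i\<in>{1..n}. add_pow R (n choose i) (a i \<otimes> b [^] (n - i))) = \<zero>"
    if n: "n \<in> {q+1..2*q+1}" for n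
  proof -
    have "add_pow R (n choose i) (a i \<otimes> b [^] (n - i))
        = add_pow R (int (n choose i) * lam i) (b [^] n)" if "i \<in> {1..n}" for i
    proof -
      have "add_pow R (n choose i) (a i \<otimes> b [^] (n - i))
          = add_pow R (int (n choose i)) (add_pow R (lam i) (b [^] n))"
        using b that nat_pow_mult[of b i "n - i"] add_pow_int_ge[of "int (n choose i)" R]
        by (simp add: a_def add_pow_ldistr_int)
      then show ?thesis using b by (simp add: add.int_pow_pow mult.commute)
    qed
    then have "(\<Oplus>i\<in>{1..n}. add_pow R (n choose i) (a i \<otimes> b [^] (n - i)))
        = (\<Oplus>i\<in>{1..n}. add_pow R (int (n choose i) * lam i) (b [^] n))"
      using b by (intro add.finprod_cong') (auto simp: a_def)
    also have "\<dots> = add_pow R (- 1 :: int) (b [^] n)"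
      using finsum_add_pow_int[of "b [^] n" "{1..n}"] b sol[OF n] by simp
    finally show ?thesis using b by (simp add: add_pow_int_lt r_neg)
  qed
  ultimately show ?thesis unfolding weak_subintegral_closure_def using b by blast
qed

lemma nat_pow_mem_ideal_pow_of_excess:
  assumes I: "ideal I R" and b: "b \<in> carrier R" and "1 \<le> k"
    and bk: "b [^] k \<in> ideal_pow R I (Suc k)" and i: "k * k < i"
  shows "b [^] i \<in> ideal_pow R I i"
proof -
  have i_eq: "i = k * (i div k) + i mod k" by simp
  moreover have "i mod k < k" using \<open>1 \<le> k\<close> by simp
  ultimately have "k * k < k * (i div k) + k" using i i_eq by linarith
  then have "k * k < k * (i div k + 1)" by simp
  then have "k \<le> i div k" by (simp only: mult_less_cancel1) linarith
  moreover have "(i div k) * Suc k = k * (i div k) + i div k" by simp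
  ultimately have "i \<le> (i div k) * Suc k" using i_eq \<open>i mod k < k\<close> by linarith
  moreover have "(b [^] k) [^] (i div k) \<otimes> b [^] (i mod k) \<in> ideal_pow R I ((i div k) * Suc k)"
    using b ideal_pow_nat_pow_mem[OF I bk]
    by (intro ideal.I_r_closed[OF ideal_pow_ideal[OF I]]) auto
  moreover have "(b [^] k) [^] (i div k) \<otimes> b [^] (i mod k) = b [^] i"
    using b by (simp add: nat_pow_pow nat_pow_mult mult.commute)
  ultimately show ?thesis using ideal_pow_antimono[OF I] by auto
qed

lemma vbar_le_1_if_no_excess:
  assumes I: "ideal I R" and b: "b \<in> carrier R"
    and no_excess: "\<And>k. 1 \<le> k \<Longrightarrow> b [^] k \<notin> ideal_pow R I (Suc k)"
  shows "vbar R I b \<le> 1"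
proof -
  define g where "g n = the_enat (ord_ideal R I (b [^] n))" for n :: nat
  have g: "b [^] n \<in> ideal_pow R I (g n) \<and> b [^] n \<notin> ideal_pow R I (Suc (g n)) \<and>
      ord_ideal R I (b [^] n) = g n \<and> g n \<le> n" if n: "1 \<le> n" for n
  proof -
    obtain m where "m < Suc n" "b [^] n \<in> ideal_pow R I m" "b [^] n \<notin> ideal_pow R I (Suc m)"
      using ideal_pow_exists_exact[OF I _ no_excess[OF n]] b by blast
    then show ?thesis using ord_ideal_eq_enat[OF I] by (simp add: g_def)
  qed
  have "(n div k) * g k \<le> g n" if "1 \<le> k" for n k
  proof (cases "n = 0")
    case False
    have "(b [^] k) [^] (n div k) \<otimes> b [^] (n mod k) \<in> ideal_pow R I ((n div k) * g k)"
      using b g[OF that] ideal_pow_nat_pow_mem[OF I]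
      by (intro ideal.I_r_closed[OF ideal_pow_ideal[OF I]]) auto
    moreover have "(b [^] k) [^] (n div k) \<otimes> b [^] (n mod k) = b [^] n"
      using b by (simp add: nat_pow_pow nat_pow_mult mult.commute)
    ultimately show ?thesis
      using g[of n] False ideal_pow_antimono[OF I, of "Suc (g n)" "(n div k) * g k"]
      by (metis less_one not_less not_less_eq_eq subsetD)
  qed simp
  then obtain s where "s \<le> 1" and s: "(\<lambda>n. real (g n) / n) \<longlonglongrightarrow> s"
    using div_superadditive_ratio_convergent[of g] g by blast
  have "\<forall>\<^sub>F n in sequentially.
      ereal (real (g n) / n) = ereal_of_enat (ord_ideal R I (b [^] n)) / ereal (real n)"
    using g by (intro eventually_sequentiallyI[of 1]) simp
  with tendsto_ereal[OF s]
  have "(\<lambda>n. ereal_of_enat (ord_ideal R I (b [^] n)) / ereal (real n)) \<longlonglongrightarrow> ereal s"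
    by (rule Lim_transform_eventually)
  then have "vbar R I b = ereal s" unfolding vbar_def by (rule limI)
  with \<open>s \<le> 1\<close> show ?thesis by simp
qed

end

theorem proposition4p4:
  fixes R :: "('a, 'b) ring_scheme" and I :: "'a set"
  assumes "cring R" and "noetherian_ring R" and "ideal I R"
  shows "I_gt R I \<subseteq> weak_subintegral_closure R I"
proof
  interpret cring R by fact
  fix b assume "b \<in> I_gt R I"
  then have b: "b \<in> carrier R" and "1 < vbar R I b" by (auto simp: I_gt_def)
  then obtain k where "1 \<le> k" "b [^]\<^bsub>R\<^esub> k \<in> ideal_pow R I (Suc k)"
    using vbar_le_1_if_no_excess[OF \<open>ideal I R\<close> b] by fastforce
  then show "b \<in> weak_subintegral_closure R I"
    using weak_subintegral_closure_memI[OF \<open>ideal I R\<close> b]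
      nat_pow_mem_ideal_pow_of_excess[OF \<open>ideal I R\<close> b] by blast
qed

end
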